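(* Let $\Pi$ be a convex self-polar pentagon on the unit sphere $S^2\subset\mathbb{R}^3$. Its diagonals bound a smaller pentagon inside $\Pi$; let $P$ be a point inside this smaller pentagon, and let $\rho$ be the central projection (from the center of the sphere) of the relevant open hemisphere onto the plane tangent to $S^2$ at $P$. Then the image $\rho(\Pi)$ is a planar pentagon whose five altitudes (for each vertex, the line through that vertex perpendicular to the opposite side) are concurrent, and they all pass through $P$.
   Context: A spherical pentagon with sides on great circles is self-polar if each vertex is the pole of the great circle containing the opposite side, i.e. each vertex (as a unit vector in $\mathbb{R}^3$) is orthogonal to the plane of the opposite side. Central projection maps a point $v$ of the open hemisphere centered at $P$ to the intersection of the line $\mathbb{R}v$ with the tangent plane $\{x: \langle x,P\rangle=1\}$; it maps great circles to straight lines. *)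

theory Defs
  imports "HOL-Analysis.Analysis" "HOL-Analysis.Cross3"
begin

text \<open>A spherical pentagon is given by its vertices v 0, ..., v 4 (indices taken mod 5),
  as vectors in real^3.\<close>

definition sdet :: "real^3 \<Rightarrow> real^3 \<Rightarrow> real^3 \<Rightarrow> real" where
  "sdet a b c = cross3 a b \<bullet> c"

definition convex_sph_pentagon :: "(nat \<Rightarrow> real^3) \<Rightarrow> bool" where
  "convex_sph_pentagon v \<longleftrightarrow>
     (\<forall>i<5. norm (v i) = 1) \<and>
     (\<exists>u. \<forall>i<5. u \<bullet> v i > 0) \<and>
     (\<exists>s\<in>{1, -1::real}. \<forall>i<5. \<forall>j<5. j \<noteq> i \<and> j \<noteq> (i+1) mod 5 \<longrightarrow>
          s * sdet (v i) (v ((i+1) mod 5)) (v j) > 0)"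

text \<open>Self-polar: each vertex is orthogonal to the plane of the opposite side, i.e. to both
  endpoints v (i+2), v (i+3) of that side.\<close>
definition self_polar_pentagon :: "(nat \<Rightarrow> real^3) \<Rightarrow> bool" where
  "self_polar_pentagon v \<longleftrightarrow>
     (\<forall>i<5. v i \<bullet> v ((i+2) mod 5) = 0 \<and> v i \<bullet> v ((i+3) mod 5) = 0)"

text \<open>P (a point of the sphere) lies in the interior of the inner pentagon bounded by the
  diagonals: for each diagonal v i v (i+2), P lies strictly on the same side of its great
  circle as the other vertices (e.g. v (i+3)), i.e. not on the side of the cut-off vertex.\<close>
definition in_inner_pentagon :: "(nat \<Rightarrow> real^3) \<Rightarrow> real^3 \<Rightarrow> bool" where
  "in_inner_pentagon v P \<longleftrightarrow> norm P = 1 \<and>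
     (\<forall>i<5. sdet (v i) (v ((i+2) mod 5)) P * sdet (v i) (v ((i+2) mod 5)) (v ((i+3) mod 5)) > 0)"

definition cproj :: "real^3 \<Rightarrow> real^3 \<Rightarrow> real^3" where
  "cproj P x = (1 / (x \<bullet> P)) *\<^sub>R x"

end

theory Submission
  imports Defs
begin

text \<open>With \<open>\<rho>(x) = x / \<langle>x, P\<rangle>\<close> we have \<open>\<langle>\<rho>(x), P\<rangle> = 1\<close>, and self-polarity gives
  \<open>\<langle>\<rho>(v\<^sub>i), \<rho>(v\<^sub>j)\<rangle> = 0\<close> for \<open>j = i+2, i+3\<close>, so
  \<open>\<langle>P - \<rho>(v\<^sub>i), \<rho>(v\<^sub>i\<^sub>+\<^sub>3) - \<rho>(v\<^sub>i\<^sub>+\<^sub>2)\<rangle> = 1 - 1 - 0 + 0 = 0\<close>.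
  The real content is that P lies in the open hemisphere centred at each vertex.
  For \<open>a = v\<^sub>i\<close>, \<open>c = v\<^sub>i\<^sub>+\<^sub>2\<close>, \<open>e = v\<^sub>i\<^sub>+\<^sub>4\<close> and \<open>[x,y,z]\<close> the triple product, \<open>a \<bottom> c\<close> and
  \<open>|a| = 1\<close> give \<open>[c,e,a] \<langle>a,P\<rangle> = \<langle>a,e\<rangle> [a,c,P] + [c,e,P]\<close>. Both triple products on the right
  carry the orientation sign because P lies inside the diagonals ac and ce, and \<open>\<langle>a,e\<rangle> > 0\<close>
  because e is the pole of the side \<open>v\<^sub>i\<^sub>+\<^sub>1 v\<^sub>i\<^sub>+\<^sub>2\<close> and a lies on the same side of it as e.\<close>

lemma sdet_rotate: "sdet a b c = sdet b c a"
  by (simp add: sdet_def cross3_simps)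

lemma sdet_diff_scaleR_middle: "sdet a (b - t *\<^sub>R c) d = sdet a b d - t * sdet a c d"
  by (simp add: sdet_def cross3_simps)

lemma sdet_nonzero_imp_distinct: "sdet a b c \<noteq> 0 \<Longrightarrow> a \<noteq> b \<and> b \<noteq> c \<and> a \<noteq> c"
  by (auto simp: sdet_def dot_cross_self)

lemma cross3_eq_sdet_scaleR_pole:
  fixes a b c :: "real^3"
  assumes "norm c = 1" "c \<bullet> a = 0" "c \<bullet> b = 0"
  shows "cross3 a b = sdet a b c *\<^sub>R c"
proof -
  define x where "x = cross3 a b"
  have "cross3 c x = 0"
    using assms(2,3) by (simp add: x_def Lagrange)
  moreover have "c \<bullet> c = 1"
    using assms(1) by (simp add: dot_square_norm)
  then have "cross3 c (cross3 c x) = (c \<bullet> x) *\<^sub>R c - x"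
    by (simp add: Lagrange)
  ultimately show ?thesis
    by (simp add: x_def sdet_def inner_commute)
qed

lemma sdet_pole:
  assumes "norm c = 1" "c \<bullet> a = 0" "c \<bullet> b = 0"
  shows "sdet a b d = sdet a b c * (c \<bullet> d)"
  unfolding sdet_def[of a b d] by (subst cross3_eq_sdet_scaleR_pole[OF assms]) simp

lemma pole_inner_pos_if_same_side:
  assumes "norm c = 1" "c \<bullet> a = 0" "c \<bullet> b = 0"
    and "s * sdet a b c > 0" "s * sdet a b d > 0"
  shows "c \<bullet> d > 0"
proof -
  have "(s * sdet a b c) * (c \<bullet> d) > 0"
    using assms(5) sdet_pole[OF assms(1-3), of d] by (simp add: mult.assoc)
  then show ?thesis
    using assms(4) by (rule zero_less_mult_pos)
qed

lemma sdet_inner_pole_identity: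
  assumes "norm a = 1" "a \<bullet> c = 0"
  shows "sdet c e a * (a \<bullet> P) = (a \<bullet> e) * sdet a c P + sdet c e P"
proof -
  define e' where "e' = e - (a \<bullet> e) *\<^sub>R a"
  have "a \<bullet> a = 1"
    using assms(1) by (simp add: dot_square_norm)
  then have "a \<bullet> e' = 0"
    by (simp add: e'_def inner_diff_right)
  then have "sdet c e' P = sdet c e' a * (a \<bullet> P)"
    using sdet_pole[OF assms] by blast
  moreover have "sdet c a a = 0" "sdet c a P = - sdet a c P"
    by (simp_all add: sdet_def cross3_simps)
  ultimately show ?thesis
    by (simp add: e'_def sdet_diff_scaleR_middle)
qed

lemma inner_pos_if_in_wedge:
  assumes "norm a = 1" "a \<bullet> c = 0" "a \<bullet> e > 0"
    and "s * sdet c e a > 0" "s * sdet a c P > 0" "s * sdet c e P > 0"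
  shows "a \<bullet> P > 0"
proof -
  have "(s * sdet c e a) * (a \<bullet> P) = (a \<bullet> e) * (s * sdet a c P) + s * sdet c e P"
    using sdet_inner_pole_identity[OF assms(1,2), of e P] by (simp add: algebra_simps)
  also have "\<dots> > 0"
    using assms(3,5,6) by (simp add: add_pos_pos)
  finally show ?thesis
    using assms(4) by (rule zero_less_mult_pos)
qed

lemma sign_transfer:
  fixes x y s :: real
  assumes "x * y > 0" "s * y > 0"
  shows "s * x > 0"
  using assms by (simp add: zero_less_mult_iff) linarith

lemma self_polar_corner_inner_pos:
  fixes a b c d e P :: "real^3"
  assumes "norm a = 1" "norm e = 1"
    and "a \<bullet> c = 0" "e \<bullet> b = 0" "e \<bullet> c = 0"
    and "s * sdet b c e > 0" "s * sdet b c a > 0" "s * sdet c d a > 0" "s * sdet e a c > 0"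
    and "sdet a c P * sdet a c d > 0" "sdet c e P * sdet c e a > 0"
  shows "a \<bullet> P > 0"
proof (rule inner_pos_if_in_wedge[OF assms(1,3)])
  show "a \<bullet> e > 0"
    using pole_inner_pos_if_same_side[OF assms(2,4-7)] by (simp add: inner_commute)
  show ce_a: "s * sdet c e a > 0"
    using assms(9) by (simp only: sdet_rotate[of c e a])
  show "s * sdet a c P > 0"
    using assms(10) by (rule sign_transfer) (use assms(8) in \<open>simp only: sdet_rotate[of a c d]\<close>)
  show "s * sdet c e P > 0"
    using assms(11) ce_a by (rule sign_transfer)
qed

lemma cproj_inj:
  fixes a b P :: "real^3"
  assumes "a \<bullet> P > 0" "b \<bullet> P > 0" "norm a = 1" "norm b = 1" "cproj P a = cproj P b"
  shows "a = b"
proof -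
  have "1 / (a \<bullet> P) = 1 / (b \<bullet> P)"
    using arg_cong[OF assms(5), of norm] assms(1-4) by (simp add: cproj_def)
  then show ?thesis
    using assms(5) assms(1) by (simp add: cproj_def)
qed

lemma cproj_orthogonal_diff:
  fixes a c d P :: "real^3"
  assumes "c \<bullet> P \<noteq> 0" "d \<bullet> P \<noteq> 0" "a \<bullet> c = 0" "a \<bullet> d = 0"
  shows "(P - cproj P a) \<bullet> (cproj P d - cproj P c) = 0"
  using assms by (simp add: cproj_def inner_diff_left inner_diff_right inner_commute)

lemma add_mod_neq_if_close:
  fixes i k l n :: nat
  assumes "k < l" "l < k + n"
  shows "(i + k) mod n \<noteq> (i + l) mod n"
proof
  assume "(i + k) mod n = (i + l) mod n"
  then have "n dvd l - k"
    using mod_eq_dvd_iff_nat[of "i + k" "i + l" n] assms(1) by simp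
  with assms show False
    using dvd_imp_le[of n "l - k"] by linarith
qed

lemma convex_sph_pentagon_vertices_distinct:
  assumes "convex_sph_pentagon v" "i < 5" "j < 5" "i \<noteq> j"
  shows "v i \<noteq> v j"
proof -
  obtain s where side: "\<forall>i<5. \<forall>j<5. j \<noteq> i \<and> j \<noteq> (i+1) mod 5 \<longrightarrow>
      s * sdet (v i) (v ((i+1) mod 5)) (v j) > 0"
    using assms(1) unfolding convex_sph_pentagon_def by blast
  have edge: "sdet (v k) (v ((k+1) mod 5)) (v l) \<noteq> 0"
    if "k < 5" "l < 5" "l \<noteq> k" "l \<noteq> (k+1) mod 5" for k l
    using side that by fastforce
  consider "j = (i+1) mod 5" | "i = (j+1) mod 5" | "j \<noteq> (i+1) mod 5" "i \<noteq> (j+1) mod 5"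
    by blast
  then show ?thesis
  proof cases
    case 1
    have "sdet (v i) (v ((i+1) mod 5)) (v ((i+2) mod 5)) \<noteq> 0"
      by (rule edge) (use assms(2) in presburger)+
    then show ?thesis
      using 1 sdet_nonzero_imp_distinct by blast
  next
    case 2
    have "sdet (v j) (v ((j+1) mod 5)) (v ((j+2) mod 5)) \<noteq> 0"
      by (rule edge) (use assms(3) in presburger)+
    then show ?thesis
      using 2 sdet_nonzero_imp_distinct by metis
  next
    case 3
    have "sdet (v i) (v ((i+1) mod 5)) (v j) \<noteq> 0"
      by (rule edge) (use assms(2-4) 3 in auto)
    then show ?thesis
      using sdet_nonzero_imp_distinct by blast
  qed
qed

lemma in_inner_pentagon_imp_vertex_inner_pos:
  assumes conv: "convex_sph_pentagon v" and polar: "self_polar_pentagon v"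
    and inner: "in_inner_pentagon v P" and "i < 5"
  shows "v i \<bullet> P > 0"
proof -
  txt \<open>Read the pentagon cyclically from vertex i, so that the corner lemma applies to
    \<open>w 0, \<dots>, w 4\<close>. Index offsets are passed as equations (\<open>m = k + 1\<close> rather than
    \<open>w (k + 1)\<close>) so that the facts below can be instantiated at numerals by \<open>rule\<close>.\<close>
  define w where "w k = v ((i + k) mod 5)" for k
  obtain s where unit: "\<forall>i<5. norm (v i) = 1"
    and side: "\<forall>i<5. \<forall>j<5. j \<noteq> i \<and> j \<noteq> (i+1) mod 5 \<longrightarrow>
      s * sdet (v i) (v ((i+1) mod 5)) (v j) > 0"
    using conv unfolding convex_sph_pentagon_def by blast
  have w_unit: "norm (w k) = 1" for k
    using unit by (simp add: w_def)
  have w_side: "s * sdet (w k) (w m) (w l) > 0" if "m = k + 1" "m < l" "l < k + 5" for k m l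
  proof -
    have "(i+k) mod 5 \<noteq> (i+l) mod 5" "(i+(k+1)) mod 5 \<noteq> (i+l) mod 5"
      by (rule add_mod_neq_if_close; use that in linarith)+
    moreover have "((i+k) mod 5 + 1) mod 5 = (i+(k+1)) mod 5"
      by (simp add: mod_simps add.assoc)
    ultimately show ?thesis
      using side[rule_format, of "(i+k) mod 5" "(i+l) mod 5"] that(1) by (auto simp: w_def)
  qed
  have w_polar: "w k \<bullet> w m = 0" if "m = k + 2 \<or> m = k + 3" for k m
    using polar[unfolded self_polar_pentagon_def, rule_format, of "(i+k) mod 5"] that
    by (auto simp: w_def mod_simps add.assoc)
  have w_inner: "sdet (w k) (w m) P * sdet (w k) (w m) (w n) > 0"
    if "m = k + 2" "n = k + 3" for k m n
    using inner[unfolded in_inner_pentagon_def, THEN conjunct2, rule_format, of "(i+k) mod 5"] that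
    by (simp add: w_def mod_simps add.assoc)
  have w_period: "w m = w k" if "m = k + 5" for k m
    using that by (simp add: w_def add.assoc[symmetric])
  have w5: "w 5 = w 0" and w6: "w 6 = w 1" and w7: "w 7 = w 2"
    by (rule w_period; simp)+
  have "w 0 \<bullet> w 2 = 0" "w 4 \<bullet> w 6 = 0" "w 4 \<bullet> w 7 = 0"
    by (rule w_polar; simp)+
  moreover have "s * sdet (w 1) (w 2) (w 4) > 0" "s * sdet (w 1) (w 2) (w 5) > 0"
    "s * sdet (w 2) (w 3) (w 5) > 0" "s * sdet (w 4) (w 5) (w 7) > 0"
    by (rule w_side; simp)+
  moreover have "sdet (w 0) (w 2) P * sdet (w 0) (w 2) (w 3) > 0"
    "sdet (w 2) (w 4) P * sdet (w 2) (w 4) (w 5) > 0"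
    by (rule w_inner; simp)+
  ultimately have "w 0 \<bullet> P > 0"
    unfolding w5 w6 w7 by (rule self_polar_corner_inner_pos[OF w_unit w_unit])
  then show ?thesis
    using assms(4) by (simp add: w_def)
qed

theorem mainTheorem2:
  fixes v :: "nat \<Rightarrow> real^3" and P :: "real^3"
  assumes "convex_sph_pentagon v"
    and "self_polar_pentagon v"
    and "in_inner_pentagon v P"
  shows "(\<forall>i<5. v i \<bullet> P > 0) \<and>
         (\<forall>i<5. \<forall>j<5. i \<noteq> j \<longrightarrow> cproj P (v i) \<noteq> cproj P (v j)) \<and>
         (\<forall>i<5. (P - cproj P (v i)) \<bullet>
                  (cproj P (v ((i+3) mod 5)) - cproj P (v ((i+2) mod 5))) = 0)"
proof (intro conjI allI impI)
  have unit: "\<forall>i<5. norm (v i) = 1"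
    using assms(1) unfolding convex_sph_pentagon_def by blast
  show pos: "v i \<bullet> P > 0" if "i < 5" for i
    using in_inner_pentagon_imp_vertex_inner_pos[OF assms that] .
  show "cproj P (v i) \<noteq> cproj P (v j)" if "i < 5" "j < 5" "i \<noteq> j" for i j
    using convex_sph_pentagon_vertices_distinct[OF assms(1) that] cproj_inj pos unit that
    by metis
  show "(P - cproj P (v i)) \<bullet> (cproj P (v ((i+3) mod 5)) - cproj P (v ((i+2) mod 5))) = 0"
    if "i < 5" for i
    using assms(2) that pos[of "(i+2) mod 5"] pos[of "(i+3) mod 5"]
    by (intro cproj_orthogonal_diff) (auto simp: self_polar_pentagon_def)
qed

end
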